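(* For any strong algebra $\mathcal{A}=(A,\le,\otimes,e,\to_{\mathcal{A}})$ there exist a non-commutative spacetime $\mathcal{S}=(\mathscr{X},\nabla)$, a monotone map $F:\mathscr{X}\to\mathscr{X}$ and a strict monoidal order embedding $i:(A,\le,\otimes,e)\to\mathscr{X}$ such that $i(a\to_{\mathcal{A}}b)=F(i(a))\to_{\mathcal{S}}F(i(b))$ for all $a,b\in A$.
   Context: A monoidal poset $(A,\le,\otimes,e)$ is a poset with a monoid structure whose multiplication is monotone in each argument. An implication on it is a function $\to:A^{op}\times A\to A$ (antitone in the first, monotone in the second argument) with $e\le a\to a$ and $(a\to b)\otimes(b\to c)\le a\to c$ for all $a,b,c$; a strong algebra is a monoidal poset with an implication. A quantale is a monoidal poset with all joins whose multiplication distributes over arbitrary joins in each argument. A non-commutative spacetime is $(\mathscr{X},\nabla)$ with $\mathscr{X}$ a quantale and $\nabla$ join preserving and oplax monoidal ($\nabla e\le e$, $\nabla(a\otimes b)\le\nabla a\otimes\nabla b$). Its implication $\to_{\mathcal{S}}$ is $a\to_{\mathcal{S}}b=\Box(a\Rightarrow b)$, where $\Box$ is the right adjoint of $\nabla$ and $\Rightarrow$ the right adjoint of $a\otimes(-)$; equivalently $a\otimes\nabla b\le c$ iff $b\le a\to_{\mathcal{S}}c$. A strict monoidal order embedding is a map $i$ with $i(e)=e$, $i(a\otimes b)=i(a)\otimes i(b)$ and $a\le b\iff i(a)\le i(b)$. *)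

theory Defs
  imports Main
begin

definition partial_order_on' :: "'a set \<Rightarrow> ('a \<Rightarrow> 'a \<Rightarrow> bool) \<Rightarrow> bool" where
  "partial_order_on' A le \<longleftrightarrow>
     (\<forall>a\<in>A. le a a) \<and>
     (\<forall>a\<in>A. \<forall>b\<in>A. \<forall>c\<in>A. le a b \<longrightarrow> le b c \<longrightarrow> le a c) \<and>
     (\<forall>a\<in>A. \<forall>b\<in>A. le a b \<longrightarrow> le b a \<longrightarrow> a = b)"

definition monoidal_poset ::
  "'a set \<Rightarrow> ('a \<Rightarrow> 'a \<Rightarrow> bool) \<Rightarrow> ('a \<Rightarrow> 'a \<Rightarrow> 'a) \<Rightarrow> 'a \<Rightarrow> bool" where
  "monoidal_poset A le m e \<longleftrightarrow>
     partial_order_on' A le \<and>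
     e \<in> A \<and> (\<forall>a\<in>A. \<forall>b\<in>A. m a b \<in> A) \<and>
     (\<forall>a\<in>A. \<forall>b\<in>A. \<forall>c\<in>A. m (m a b) c = m a (m b c)) \<and>
     (\<forall>a\<in>A. m e a = a \<and> m a e = a) \<and>
     (\<forall>a\<in>A. \<forall>a'\<in>A. \<forall>b\<in>A. le a a' \<longrightarrow> le (m a b) (m a' b) \<and> le (m b a) (m b a'))"

definition strong_algebra ::
  "'a set \<Rightarrow> ('a \<Rightarrow> 'a \<Rightarrow> bool) \<Rightarrow> ('a \<Rightarrow> 'a \<Rightarrow> 'a) \<Rightarrow> 'a \<Rightarrow> ('a \<Rightarrow> 'a \<Rightarrow> 'a) \<Rightarrow> bool" where
  "strong_algebra A le m e imp \<longleftrightarrow>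
     monoidal_poset A le m e \<and>
     (\<forall>a\<in>A. \<forall>b\<in>A. imp a b \<in> A) \<and>
     (\<forall>a\<in>A. \<forall>a'\<in>A. \<forall>b\<in>A. le a a' \<longrightarrow> le (imp a' b) (imp a b)) \<and>
     (\<forall>a\<in>A. \<forall>b\<in>A. \<forall>b'\<in>A. le b b' \<longrightarrow> le (imp a b) (imp a b')) \<and>
     (\<forall>a\<in>A. le e (imp a a)) \<and>
     (\<forall>a\<in>A. \<forall>b\<in>A. \<forall>c\<in>A. le (m (imp a b) (imp b c)) (imp a c))"

definition is_lub :: "'a set \<Rightarrow> ('a \<Rightarrow> 'a \<Rightarrow> bool) \<Rightarrow> 'a set \<Rightarrow> 'a \<Rightarrow> bool" where
  "is_lub X le S s \<longleftrightarrow> s \<in> X \<and> (\<forall>x\<in>S. le x s) \<and> (\<forall>u\<in>X. (\<forall>x\<in>S. le x u) \<longrightarrow> le s u)"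

definition quantale ::
  "'a set \<Rightarrow> ('a \<Rightarrow> 'a \<Rightarrow> bool) \<Rightarrow> ('a \<Rightarrow> 'a \<Rightarrow> 'a) \<Rightarrow> 'a \<Rightarrow> bool" where
  "quantale X le m e \<longleftrightarrow>
     monoidal_poset X le m e \<and>
     (\<forall>S. S \<subseteq> X \<longrightarrow> (\<exists>s. is_lub X le S s)) \<and>
     (\<forall>a\<in>X. \<forall>S s. S \<subseteq> X \<longrightarrow> is_lub X le S s \<longrightarrow>
        is_lub X le ((\<lambda>x. m a x) ` S) (m a s) \<and> is_lub X le ((\<lambda>x. m x a) ` S) (m s a))"

definition nc_spacetime ::
  "'a set \<Rightarrow> ('a \<Rightarrow> 'a \<Rightarrow> bool) \<Rightarrow> ('a \<Rightarrow> 'a \<Rightarrow> 'a) \<Rightarrow> 'a \<Rightarrow> ('a \<Rightarrow> 'a) \<Rightarrow> bool" where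
  "nc_spacetime X le m e nabla \<longleftrightarrow>
     quantale X le m e \<and>
     (\<forall>x\<in>X. nabla x \<in> X) \<and>
     (\<forall>S s. S \<subseteq> X \<longrightarrow> is_lub X le S s \<longrightarrow> is_lub X le (nabla ` S) (nabla s)) \<and>
     le (nabla e) e \<and>
     (\<forall>a\<in>X. \<forall>b\<in>X. le (nabla (m a b)) (m (nabla a) (nabla b)))"

text \<open>Right adjoints: box (of nabla) and the residual (of a \<otimes> -).\<close>
definition st_box :: "'a set \<Rightarrow> ('a \<Rightarrow> 'a \<Rightarrow> bool) \<Rightarrow> ('a \<Rightarrow> 'a) \<Rightarrow> 'a \<Rightarrow> 'a" where
  "st_box X le nabla x = (THE y. y \<in> X \<and> le (nabla y) x \<and> (\<forall>z\<in>X. le (nabla z) x \<longrightarrow> le z y))"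

definition st_res :: "'a set \<Rightarrow> ('a \<Rightarrow> 'a \<Rightarrow> bool) \<Rightarrow> ('a \<Rightarrow> 'a \<Rightarrow> 'a) \<Rightarrow> 'a \<Rightarrow> 'a \<Rightarrow> 'a" where
  "st_res X le m a b = (THE y. y \<in> X \<and> le (m a y) b \<and> (\<forall>z\<in>X. le (m a z) b \<longrightarrow> le z y))"

definition st_imp ::
  "'a set \<Rightarrow> ('a \<Rightarrow> 'a \<Rightarrow> bool) \<Rightarrow> ('a \<Rightarrow> 'a \<Rightarrow> 'a) \<Rightarrow> ('a \<Rightarrow> 'a) \<Rightarrow> 'a \<Rightarrow> 'a \<Rightarrow> 'a" where
  "st_imp X le m nabla a b = st_box X le nabla (st_res X le m a b)"

definition strict_monoidal_order_embedding ::
  "'a set \<Rightarrow> ('a \<Rightarrow> 'a \<Rightarrow> bool) \<Rightarrow> ('a \<Rightarrow> 'a \<Rightarrow> 'a) \<Rightarrow> 'a \<Rightarrow>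
   'b set \<Rightarrow> ('b \<Rightarrow> 'b \<Rightarrow> bool) \<Rightarrow> ('b \<Rightarrow> 'b \<Rightarrow> 'b) \<Rightarrow> 'b \<Rightarrow> ('a \<Rightarrow> 'b) \<Rightarrow> bool" where
  "strict_monoidal_order_embedding A leA mA eA X leX mX eX i \<longleftrightarrow>
     (\<forall>a\<in>A. i a \<in> X) \<and> i eA = eX \<and>
     (\<forall>a\<in>A. \<forall>b\<in>A. i (mA a b) = mX (i a) (i b)) \<and>
     (\<forall>a\<in>A. \<forall>b\<in>A. leA a b \<longleftrightarrow> leX (i a) (i b))"

end

theory Submission
  imports Defs
begin

text \<open>
  Let T be the monoid with a unit 1, a label [p] for every p \<in> A and an absorbing zero, in which
  any two non-unit elements multiply to zero. The down-sets of A \<times> T, ordered by \<le> on A and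
  discretely on T, form a quantale; with \<nabla> = id the box is the identity and the spacetime
  implication is the residual. Embed a as the down-set i a of (a, 1) (emb below), and let F U
  (lift U below) consist of the (x, [p]) with x \<le> p \<rightarrow> b for some (b, 1) \<in> U.
  Composition (p \<rightarrow> a) \<otimes> (a \<rightarrow> b) \<le> p \<rightarrow> b gives F (i a) \<otimes> i (a \<rightarrow> b) \<subseteq> F (i b).
  Conversely, let F (i a) \<otimes> Z \<subseteq> F (i b). Multiplying (y, u) \<in> Z by (e, [a]), which lies in
  F (i a) because e \<le> a \<rightarrow> a, yields (y, [a] u); as a product of two labels is zero, this lies in
  F (i b) only if u = 1 and y \<le> a \<rightarrow> b' \<le> a \<rightarrow> b for some b' \<le> b. So i (a \<rightarrow> b) is the residual.
\<close>

section \<open>Ordered monoids on a carrier\<close>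

locale ordered_monoid_on =
  fixes M :: "'a set" and le :: "'a \<Rightarrow> 'a \<Rightarrow> bool" and mult :: "'a \<Rightarrow> 'a \<Rightarrow> 'a" and one :: 'a
  assumes ord_refl: "a \<in> M \<Longrightarrow> le a a"
    and ord_trans: "a \<in> M \<Longrightarrow> b \<in> M \<Longrightarrow> c \<in> M \<Longrightarrow> le a b \<Longrightarrow> le b c \<Longrightarrow> le a c"
    and ord_antisym: "a \<in> M \<Longrightarrow> b \<in> M \<Longrightarrow> le a b \<Longrightarrow> le b a \<Longrightarrow> a = b"
    and one_closed: "one \<in> M"
    and mult_closed: "a \<in> M \<Longrightarrow> b \<in> M \<Longrightarrow> mult a b \<in> M"
    and mult_assoc: "a \<in> M \<Longrightarrow> b \<in> M \<Longrightarrow> c \<in> M \<Longrightarrow> mult (mult a b) c = mult a (mult b c)"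
    and mult_one_left: "a \<in> M \<Longrightarrow> mult one a = a"
    and mult_one_right: "a \<in> M \<Longrightarrow> mult a one = a"
    and mult_mono_left: "a \<in> M \<Longrightarrow> a' \<in> M \<Longrightarrow> b \<in> M \<Longrightarrow> le a a' \<Longrightarrow> le (mult a b) (mult a' b)"
    and mult_mono_right: "a \<in> M \<Longrightarrow> a' \<in> M \<Longrightarrow> b \<in> M \<Longrightarrow> le a a' \<Longrightarrow> le (mult b a) (mult b a')"

lemma ordered_monoid_on_if_monoidal_poset:
  "monoidal_poset M le mult one \<Longrightarrow> ordered_monoid_on M le mult one"
  unfolding monoidal_poset_def partial_order_on'_def
  by unfold_locales (elim conjE, blast)+

lemma (in ordered_monoid_on) monoidal_poset: "monoidal_poset M le mult one"
  unfolding monoidal_poset_def partial_order_on'_def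
  by (intro conjI ballI impI; (rule ord_refl ord_antisym one_closed mult_closed mult_assoc
      mult_one_left mult_one_right mult_mono_left mult_mono_right ord_trans; assumption))

lemma (in ordered_monoid_on) mult_mono:
  assumes "a \<in> M" "a' \<in> M" "b \<in> M" "b' \<in> M" "le a a'" "le b b'"
  shows "le (mult a b) (mult a' b')"
  using ord_trans[OF mult_closed[OF assms(1,3)] mult_closed[OF assms(2,3)] mult_closed[OF assms(2,4)]
      mult_mono_left[OF assms(1-3,5)] mult_mono_right[OF assms(3,4,2,6)]] .

locale strong_algebra_on = ordered_monoid_on A le m e
  for A :: "'a set" and le :: "'a \<Rightarrow> 'a \<Rightarrow> bool" and m :: "'a \<Rightarrow> 'a \<Rightarrow> 'a" and e :: 'a +
  fixes imp :: "'a \<Rightarrow> 'a \<Rightarrow> 'a"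
  assumes imp_closed: "a \<in> A \<Longrightarrow> b \<in> A \<Longrightarrow> imp a b \<in> A"
    and imp_antimono: "a \<in> A \<Longrightarrow> a' \<in> A \<Longrightarrow> b \<in> A \<Longrightarrow> le a a' \<Longrightarrow> le (imp a' b) (imp a b)"
    and imp_mono: "a \<in> A \<Longrightarrow> b \<in> A \<Longrightarrow> b' \<in> A \<Longrightarrow> le b b' \<Longrightarrow> le (imp a b) (imp a b')"
    and one_le_imp_self: "a \<in> A \<Longrightarrow> le e (imp a a)"
    and imp_comp: "a \<in> A \<Longrightarrow> b \<in> A \<Longrightarrow> c \<in> A \<Longrightarrow> le (m (imp a b) (imp b c)) (imp a c)"

lemma strong_algebra_on_if_strong_algebra:
  "strong_algebra A le m e imp \<Longrightarrow> strong_algebra_on A le m e imp"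
  unfolding strong_algebra_def strong_algebra_on_def strong_algebra_on_axioms_def
  by (elim conjE) (intro conjI allI impI ordered_monoid_on_if_monoidal_poset; blast)

section \<open>Down-set quantales\<close>

definition down_sets :: "'a set \<Rightarrow> ('a \<Rightarrow> 'a \<Rightarrow> bool) \<Rightarrow> 'a set set" where
  "down_sets M le = {U. U \<subseteq> M \<and> (\<forall>x\<in>U. \<forall>y\<in>M. le y x \<longrightarrow> y \<in> U)}"

definition down_mult ::
  "'a set \<Rightarrow> ('a \<Rightarrow> 'a \<Rightarrow> bool) \<Rightarrow> ('a \<Rightarrow> 'a \<Rightarrow> 'a) \<Rightarrow> 'a set \<Rightarrow> 'a set \<Rightarrow> 'a set" where
  "down_mult M le mult U V = {z \<in> M. \<exists>x\<in>U. \<exists>y\<in>V. le z (mult x y)}"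

definition down_one :: "'a set \<Rightarrow> ('a \<Rightarrow> 'a \<Rightarrow> bool) \<Rightarrow> 'a \<Rightarrow> 'a set" where
  "down_one M le one = {z \<in> M. le z one}"

lemma down_setsD: "U \<in> down_sets M le \<Longrightarrow> x \<in> U \<Longrightarrow> y \<in> M \<Longrightarrow> le y x \<Longrightarrow> y \<in> U"
  unfolding down_sets_def by blast

lemma down_sets_subset: "U \<in> down_sets M le \<Longrightarrow> U \<subseteq> M"
  unfolding down_sets_def by blast

lemma down_multI:
  "z \<in> M \<Longrightarrow> x \<in> U \<Longrightarrow> y \<in> V \<Longrightarrow> le z (mult x y) \<Longrightarrow> z \<in> down_mult M le mult U V"
  unfolding down_mult_def by blast

lemma down_multE:
  assumes "z \<in> down_mult M le mult U V"
  obtains x y where "z \<in> M" "x \<in> U" "y \<in> V" "le z (mult x y)"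
  using assms unfolding down_mult_def by blast

lemma down_mult_mono: "U \<subseteq> U' \<Longrightarrow> V \<subseteq> V' \<Longrightarrow> down_mult M le mult U V \<subseteq> down_mult M le mult U' V'"
  unfolding down_mult_def by blast

lemma down_mult_Union_right: "down_mult M le mult U (\<Union>S) = (\<Union>V\<in>S. down_mult M le mult U V)"
  unfolding down_mult_def by blast

lemma down_mult_Union_left: "down_mult M le mult (\<Union>S) V = (\<Union>U\<in>S. down_mult M le mult U V)"
  unfolding down_mult_def by blast

lemma is_lub_unique: "partial_order_on' X le \<Longrightarrow> is_lub X le S s \<Longrightarrow> is_lub X le S t \<Longrightarrow> s = t"
  unfolding partial_order_on'_def is_lub_def by blast

lemma Union_is_lub_down_sets:
  assumes "S \<subseteq> down_sets M le"
  shows "is_lub (down_sets M le) (\<subseteq>) S (\<Union>S)"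
proof -
  have "\<Union>S \<in> down_sets M le"
    using assms unfolding down_sets_def by blast
  then show ?thesis
    unfolding is_lub_def by blast
qed

lemma partial_order_on'_down_sets: "partial_order_on' (down_sets M le) (\<subseteq>)"
  unfolding partial_order_on'_def by auto

lemma is_lub_down_sets_iff:
  assumes "S \<subseteq> down_sets M le"
  shows "is_lub (down_sets M le) (\<subseteq>) S s \<longleftrightarrow> s = \<Union>S"
proof
  show "is_lub (down_sets M le) (\<subseteq>) S s \<Longrightarrow> s = \<Union>S"
    by (rule is_lub_unique[OF partial_order_on'_down_sets _ Union_is_lub_down_sets[OF assms]])
next
  show "s = \<Union>S \<Longrightarrow> is_lub (down_sets M le) (\<subseteq>) S s"
    using Union_is_lub_down_sets[OF assms] by (simp only:)
qed

context ordered_monoid_on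
begin

lemma down_mult_mem_down_sets:
  assumes "U \<subseteq> M" "V \<subseteq> M"
  shows "down_mult M le mult U V \<in> down_sets M le"
  unfolding down_sets_def
proof (intro CollectI conjI ballI impI)
  show "down_mult M le mult U V \<subseteq> M"
    unfolding down_mult_def by blast
next
  fix z w assume "z \<in> down_mult M le mult U V" "w \<in> M" "le w z"
  from \<open>z \<in> down_mult M le mult U V\<close> obtain x y
    where "z \<in> M" "x \<in> U" "y \<in> V" "le z (mult x y)"
    by (rule down_multE)
  moreover from assms \<open>x \<in> U\<close> \<open>y \<in> V\<close> have "mult x y \<in> M"
    by (blast intro: mult_closed)
  ultimately have "le w (mult x y)"
    using ord_trans \<open>w \<in> M\<close> \<open>le w z\<close> by blast
  with \<open>w \<in> M\<close> \<open>x \<in> U\<close> \<open>y \<in> V\<close> show "w \<in> down_mult M le mult U V"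
    by (rule down_multI)
qed

lemma down_one_mem_down_sets: "down_one M le one \<in> down_sets M le"
  unfolding down_sets_def down_one_def
  using ord_trans[OF _ _ one_closed] by blast

lemma down_mult_assoc:
  assumes "U \<subseteq> M" "V \<subseteq> M" "W \<subseteq> M"
  shows "down_mult M le mult (down_mult M le mult U V) W = down_mult M le mult U (down_mult M le mult V W)"
proof (intro set_eqI iffI)
  fix z assume "z \<in> down_mult M le mult (down_mult M le mult U V) W"
  then obtain t w where z: "z \<in> M" and "t \<in> down_mult M le mult U V" "w \<in> W"
    and zt: "le z (mult t w)"
    by (rule down_multE)
  then obtain x y where t: "t \<in> M" and "x \<in> U" "y \<in> V" and txy: "le t (mult x y)"
    by (elim down_multE)
  have x: "x \<in> M" and y: "y \<in> M" and w: "w \<in> M"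
    using assms \<open>x \<in> U\<close> \<open>y \<in> V\<close> \<open>w \<in> W\<close> by auto
  have "le (mult t w) (mult (mult x y) w)"
    by (rule mult_mono_left[OF t mult_closed[OF x y] w txy])
  then have "le z (mult (mult x y) w)"
    by (rule ord_trans[OF z mult_closed[OF t w] mult_closed[OF mult_closed[OF x y] w] zt])
  then have zle: "le z (mult x (mult y w))"
    by (simp add: mult_assoc[OF x y w])
  have yw: "mult y w \<in> down_mult M le mult V W"
    using mult_closed[OF y w] \<open>y \<in> V\<close> \<open>w \<in> W\<close> ord_refl[OF mult_closed[OF y w]]
    by (rule down_multI)
  from z \<open>x \<in> U\<close> yw zle show "z \<in> down_mult M le mult U (down_mult M le mult V W)"
    by (rule down_multI[where mult = mult])
next
  fix z assume "z \<in> down_mult M le mult U (down_mult M le mult V W)"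
  then obtain x t where z: "z \<in> M" and "x \<in> U" "t \<in> down_mult M le mult V W"
    and zt: "le z (mult x t)"
    by (rule down_multE)
  then obtain y w where t: "t \<in> M" and "y \<in> V" "w \<in> W" and tyw: "le t (mult y w)"
    by (elim down_multE)
  have x: "x \<in> M" and y: "y \<in> M" and w: "w \<in> M"
    using assms \<open>x \<in> U\<close> \<open>y \<in> V\<close> \<open>w \<in> W\<close> by auto
  have "le (mult x t) (mult x (mult y w))"
    by (rule mult_mono_right[OF t mult_closed[OF y w] x tyw])
  then have "le z (mult x (mult y w))"
    by (rule ord_trans[OF z mult_closed[OF x t] mult_closed[OF x mult_closed[OF y w]] zt])
  then have zle: "le z (mult (mult x y) w)"
    by (simp add: mult_assoc[OF x y w])
  have xy: "mult x y \<in> down_mult M le mult U V"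
    using mult_closed[OF x y] \<open>x \<in> U\<close> \<open>y \<in> V\<close> ord_refl[OF mult_closed[OF x y]]
    by (rule down_multI)
  from z xy \<open>w \<in> W\<close> zle show "z \<in> down_mult M le mult (down_mult M le mult U V) W"
    by (rule down_multI[where mult = mult])
qed

lemma down_mult_one_left:
  assumes "U \<in> down_sets M le"
  shows "down_mult M le mult (down_one M le one) U = U"
proof (intro set_eqI iffI)
  fix z assume "z \<in> down_mult M le mult (down_one M le one) U"
  then obtain t u where z: "z \<in> M" and "t \<in> down_one M le one" "u \<in> U" and zt: "le z (mult t u)"
    by (rule down_multE)
  then have t: "t \<in> M" and t1: "le t one" and u: "u \<in> M"
    using down_sets_subset[OF assms] unfolding down_one_def by auto
  have "le (mult t u) u"
    using mult_mono_left[OF t one_closed u t1] by (simp add: mult_one_left[OF u])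
  with z zt have "le z u"
    using ord_trans[OF z mult_closed[OF t u] u] by blast
  with assms \<open>u \<in> U\<close> z show "z \<in> U"
    by (rule down_setsD)
next
  fix z assume "z \<in> U"
  with down_sets_subset[OF assms] have z: "z \<in> M" by blast
  have "one \<in> down_one M le one"
    unfolding down_one_def using one_closed ord_refl[OF one_closed] by blast
  moreover have "le z (mult one z)"
    using ord_refl[OF z] by (simp add: mult_one_left[OF z])
  ultimately show "z \<in> down_mult M le mult (down_one M le one) U"
    using z \<open>z \<in> U\<close> by (intro down_multI[where mult = mult])
qed

lemma down_mult_one_right:
  assumes "U \<in> down_sets M le"
  shows "down_mult M le mult U (down_one M le one) = U"
proof (intro set_eqI iffI)
  fix z assume "z \<in> down_mult M le mult U (down_one M le one)"
  then obtain u t where z: "z \<in> M" and "u \<in> U" "t \<in> down_one M le one" and zt: "le z (mult u t)"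
    by (rule down_multE)
  then have t: "t \<in> M" and t1: "le t one" and u: "u \<in> M"
    using down_sets_subset[OF assms] unfolding down_one_def by auto
  have "le (mult u t) u"
    using mult_mono_right[OF t one_closed u t1] by (simp add: mult_one_right[OF u])
  with z zt have "le z u"
    using ord_trans[OF z mult_closed[OF u t] u] by blast
  with assms \<open>u \<in> U\<close> z show "z \<in> U"
    by (rule down_setsD)
next
  fix z assume "z \<in> U"
  with down_sets_subset[OF assms] have z: "z \<in> M" by blast
  have "one \<in> down_one M le one"
    unfolding down_one_def using one_closed ord_refl[OF one_closed] by blast
  moreover have "le z (mult z one)"
    using ord_refl[OF z] by (simp add: mult_one_right[OF z])
  ultimately show "z \<in> down_mult M le mult U (down_one M le one)"
    using z \<open>z \<in> U\<close> by (intro down_multI[where mult = mult])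
qed

lemma ordered_monoid_on_down_sets:
  "ordered_monoid_on (down_sets M le) (\<subseteq>) (down_mult M le mult) (down_one M le one)"
proof unfold_locales
  fix U V W assume "U \<in> down_sets M le" "V \<in> down_sets M le" "W \<in> down_sets M le"
  then show "down_mult M le mult (down_mult M le mult U V) W = down_mult M le mult U (down_mult M le mult V W)"
    by (intro down_mult_assoc down_sets_subset)
next
  fix U V assume "U \<in> down_sets M le" "V \<in> down_sets M le"
  then show "down_mult M le mult U V \<in> down_sets M le"
    by (intro down_mult_mem_down_sets down_sets_subset)
qed (auto simp: down_one_mem_down_sets down_mult_one_left down_mult_one_right down_mult_mono)

lemma quantale_down_sets: "quantale (down_sets M le) (\<subseteq>) (down_mult M le mult) (down_one M le one)"
  unfolding quantale_def
proof (intro conjI allI impI ballI)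
  show "monoidal_poset (down_sets M le) (\<subseteq>) (down_mult M le mult) (down_one M le one)"
    by (rule ordered_monoid_on.monoidal_poset[OF ordered_monoid_on_down_sets])
next
  fix S :: "'a set set" assume "S \<subseteq> down_sets M le"
  then have "is_lub (down_sets M le) (\<subseteq>) S (\<Union>S)"
    by (rule Union_is_lub_down_sets)
  then show "\<exists>s. is_lub (down_sets M le) (\<subseteq>) S s" ..
next
  fix U S s assume U: "U \<in> down_sets M le" and S: "S \<subseteq> down_sets M le"
    and "is_lub (down_sets M le) (\<subseteq>) S s"
  then have s: "s = \<Union>S"
    by (simp add: is_lub_down_sets_iff)
  have "down_mult M le mult U V \<in> down_sets M le" "down_mult M le mult V U \<in> down_sets M le"
    if "V \<in> down_sets M le" for V
    using U that by (simp_all add: down_mult_mem_down_sets down_sets_subset)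
  then have "down_mult M le mult U ` S \<subseteq> down_sets M le"
    "(\<lambda>V. down_mult M le mult V U) ` S \<subseteq> down_sets M le"
    using S by auto
  then show "is_lub (down_sets M le) (\<subseteq>) ((\<lambda>V. down_mult M le mult U V) ` S) (down_mult M le mult U s)"
    and "is_lub (down_sets M le) (\<subseteq>) ((\<lambda>V. down_mult M le mult V U) ` S) (down_mult M le mult s U)"
    by (simp_all add: is_lub_down_sets_iff s down_mult_Union_left down_mult_Union_right)
qed

end

lemma nc_spacetime_id:
  assumes "quantale X le m e"
  shows "nc_spacetime X le m e (\<lambda>x. x)"
proof -
  interpret ordered_monoid_on X le m e
    using assms unfolding quantale_def by (simp add: ordered_monoid_on_if_monoidal_poset)
  show ?thesis
    unfolding nc_spacetime_def using assms by (simp add: ord_refl one_closed mult_closed)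
qed

lemma partial_order_on'_refl: "partial_order_on' X le \<Longrightarrow> x \<in> X \<Longrightarrow> le x x"
  unfolding partial_order_on'_def by (elim conjE) blast

lemma partial_order_on'_antisym:
  "partial_order_on' X le \<Longrightarrow> x \<in> X \<Longrightarrow> y \<in> X \<Longrightarrow> le x y \<Longrightarrow> le y x \<Longrightarrow> x = y"
  unfolding partial_order_on'_def by (elim conjE) blast

lemma st_box_id:
  assumes "partial_order_on' X le" "x \<in> X"
  shows "st_box X le (\<lambda>x. x) x = x"
  unfolding st_box_def
proof (rule the_equality)
  show "x \<in> X \<and> le x x \<and> (\<forall>z\<in>X. le z x \<longrightarrow> le z x)"
    using assms by (simp add: partial_order_on'_refl)
next
  fix y assume "y \<in> X \<and> le y x \<and> (\<forall>z\<in>X. le z x \<longrightarrow> le z y)"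
  with assms have "y \<in> X" "le y x" "le x y"
    by (simp_all add: partial_order_on'_refl)
  then show "y = x"
    by (rule partial_order_on'_antisym[OF assms(1) _ assms(2)])
qed

lemma st_res_eqI:
  assumes "partial_order_on' X le" "y \<in> X" "le (m a y) b"
    "\<And>z. z \<in> X \<Longrightarrow> le (m a z) b \<Longrightarrow> le z y"
  shows "st_res X le m a b = y"
  unfolding st_res_def
proof (rule the_equality)
  show "y \<in> X \<and> le (m a y) b \<and> (\<forall>z\<in>X. le (m a z) b \<longrightarrow> le z y)"
    using assms(2-4) by simp
next
  fix y' assume "y' \<in> X \<and> le (m a y') b \<and> (\<forall>z\<in>X. le (m a z) b \<longrightarrow> le z y')"
  with assms(2-4) have "y' \<in> X" "le y' y" "le y y'"
    by simp_all
  then show "y' = y"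
    by (rule partial_order_on'_antisym[OF assms(1) _ assms(2)])
qed

section \<open>Tagged points\<close>

datatype 'a tag = Unit | Label 'a | Zero

instantiation tag :: (type) monoid_mult
begin

definition one_tag_def: "1 = Unit"

fun times_tag :: "'a tag \<Rightarrow> 'a tag \<Rightarrow> 'a tag" where
  "times_tag Unit t = t"
| "times_tag t Unit = t"
| "times_tag _ _ = Zero"

instance
proof
  fix s t u :: "'a tag"
  show "s * t * u = s * (t * u)"
    by (cases s; cases t; cases u) simp_all
  show "1 * t = t"
    by (simp add: one_tag_def)
  show "t * 1 = t"
    by (cases t) (simp_all add: one_tag_def)
qed

end

lemma Label_times_eq_Label_iff: "Label a * t = Label b \<longleftrightarrow> t = 1 \<and> b = a"
  by (cases t) (auto simp: one_tag_def)

definition prod_le :: "('a \<Rightarrow> 'a \<Rightarrow> bool) \<Rightarrow> 'a \<times> 'b \<Rightarrow> 'a \<times> 'b \<Rightarrow> bool" where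
  "prod_le le p q \<longleftrightarrow> le (fst p) (fst q) \<and> snd p = snd q"

definition prod_mult :: "('a \<Rightarrow> 'a \<Rightarrow> 'a) \<Rightarrow> 'a \<times> 'b::times \<Rightarrow> 'a \<times> 'b \<Rightarrow> 'a \<times> 'b" where
  "prod_mult m p q = (m (fst p) (fst q), snd p * snd q)"

lemma (in ordered_monoid_on) ordered_monoid_on_prod_discrete:
  "ordered_monoid_on (M \<times> (UNIV :: 'b::monoid_mult set)) (prod_le le) (prod_mult mult) (one, 1)"
proof unfold_locales
  fix p q r :: "'a \<times> 'b"
  assume "p \<in> M \<times> UNIV" "q \<in> M \<times> UNIV" "r \<in> M \<times> UNIV" "prod_le le p q" "prod_le le q r"
  then show "prod_le le p r"
    unfolding prod_le_def using ord_trans[of "fst p" "fst q" "fst r"] by auto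
next
  fix p q :: "'a \<times> 'b"
  assume "p \<in> M \<times> UNIV" "q \<in> M \<times> UNIV" "prod_le le p q" "prod_le le q p"
  then show "p = q"
    unfolding prod_le_def using ord_antisym[of "fst p" "fst q"] by (auto simp: prod_eq_iff)
next
  fix p q r :: "'a \<times> 'b"
  assume "p \<in> M \<times> UNIV" "q \<in> M \<times> UNIV" "r \<in> M \<times> UNIV"
  then show "prod_mult mult (prod_mult mult p q) r = prod_mult mult p (prod_mult mult q r)"
    unfolding prod_mult_def by (auto simp: mem_Times_iff mult_assoc mult.assoc)
next
  fix p p' q :: "'a \<times> 'b"
  assume "p \<in> M \<times> UNIV" "p' \<in> M \<times> UNIV" "q \<in> M \<times> UNIV" "prod_le le p p'"
  then show "prod_le le (prod_mult mult p q) (prod_mult mult p' q)"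
    and "prod_le le (prod_mult mult q p) (prod_mult mult q p')"
    unfolding prod_le_def prod_mult_def by (auto simp: mem_Times_iff mult_mono_left mult_mono_right)
qed (auto simp: prod_le_def prod_mult_def ord_refl one_closed mult_closed mult_one_left mult_one_right)

definition image_le :: "('a \<Rightarrow> 'b) \<Rightarrow> ('a \<Rightarrow> 'a \<Rightarrow> bool) \<Rightarrow> 'b \<Rightarrow> 'b \<Rightarrow> bool" where
  "image_le f le s t \<longleftrightarrow> le (inv f s) (inv f t)"

definition image_mult :: "('a \<Rightarrow> 'b) \<Rightarrow> ('a \<Rightarrow> 'a \<Rightarrow> 'a) \<Rightarrow> 'b \<Rightarrow> 'b \<Rightarrow> 'b" where
  "image_mult f mult s t = f (mult (inv f s) (inv f t))"

lemma (in ordered_monoid_on) ordered_monoid_on_image: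
  assumes "inj f"
  shows "ordered_monoid_on (f ` M) (image_le f le) (image_mult f mult) (f one)"
proof -
  have inv_f: "inv f (f x) = x" for x
    using assms by (rule inv_f_f)
  show ?thesis
  proof unfold_locales
    fix a b c assume "a \<in> f ` M" "b \<in> f ` M" "c \<in> f ` M" "image_le f le a b" "image_le f le b c"
    then obtain x y z where "x \<in> M" "y \<in> M" "z \<in> M" "le x y" "le y z" "a = f x" "c = f z"
      unfolding image_le_def by (auto simp: inv_f)
    then show "image_le f le a c"
      unfolding image_le_def using ord_trans[of x y z] by (simp add: inv_f)
  next
    fix a b assume "a \<in> f ` M" "b \<in> f ` M" "image_le f le a b" "image_le f le b a"
    then obtain x y where "x \<in> M" "y \<in> M" "le x y" "le y x" "a = f x" "b = f y"
      unfolding image_le_def by (auto simp: inv_f)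
    then show "a = b"
      using ord_antisym[of x y] by simp
  qed (auto simp: image_le_def image_mult_def inv_f ord_refl one_closed mult_closed
    mult_assoc mult_one_left mult_one_right mult_mono_left mult_mono_right)
qed

locale tagged_points = strong_algebra_on A le m e imp
  for A :: "'a set" and le :: "'a \<Rightarrow> 'a \<Rightarrow> bool" and m :: "'a \<Rightarrow> 'a \<Rightarrow> 'a" and e :: 'a
    and imp :: "'a \<Rightarrow> 'a \<Rightarrow> 'a" +
  fixes enc :: "'a \<times> 'a tag \<Rightarrow> 'b"
  assumes inj_enc: "inj enc"
begin

abbreviation pts :: "'b set" where
  "pts \<equiv> enc ` (A \<times> UNIV)"

abbreviation pt_le :: "'b \<Rightarrow> 'b \<Rightarrow> bool" where
  "pt_le \<equiv> image_le enc (prod_le le)"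

abbreviation pt_mult :: "'b \<Rightarrow> 'b \<Rightarrow> 'b" where
  "pt_mult \<equiv> image_mult enc (prod_mult m)"

abbreviation down_pts :: "'b set set" where
  "down_pts \<equiv> down_sets pts pt_le"

abbreviation down_pts_mult :: "'b set \<Rightarrow> 'b set \<Rightarrow> 'b set" where
  "down_pts_mult \<equiv> down_mult pts pt_le pt_mult"

abbreviation down_pts_one :: "'b set" where
  "down_pts_one \<equiv> down_one pts pt_le (enc (e, 1))"

lemma ordered_monoid_on_pts: "ordered_monoid_on pts pt_le pt_mult (enc (e, 1))"
  by (rule ordered_monoid_on.ordered_monoid_on_image[OF ordered_monoid_on_prod_discrete inj_enc])

lemma pt_le_enc [simp]: "pt_le (enc (x, u)) (enc (y, v)) \<longleftrightarrow> le x y \<and> u = v"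
  by (simp add: image_le_def prod_le_def inv_f_f[OF inj_enc])

lemma pt_mult_enc [simp]: "pt_mult (enc (x, u)) (enc (y, v)) = enc (m x y, u * v)"
  by (simp add: image_mult_def prod_mult_def inv_f_f[OF inj_enc])

lemma enc_eq_iff [simp]: "enc p = enc q \<longleftrightarrow> p = q"
  by (rule inj_eq[OF inj_enc])

lemma enc_mem_pts [simp]: "enc (x, u) \<in> pts \<longleftrightarrow> x \<in> A"
  by (auto simp: inj_image_mem_iff[OF inj_enc])

definition emb :: "'a \<Rightarrow> 'b set" where
  "emb a = {enc (x, 1) | x. x \<in> A \<and> le x a}"

definition lift :: "'b set \<Rightarrow> 'b set" where
  "lift U = {enc (x, Label p) | x p b. x \<in> A \<and> p \<in> A \<and> b \<in> A \<and> enc (b, 1) \<in> U \<and> le x (imp p b)}"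

lemma enc_mem_emb [simp]: "enc (x, u) \<in> emb a \<longleftrightarrow> x \<in> A \<and> u = 1 \<and> le x a"
  unfolding emb_def by auto

lemma enc_mem_lift [simp]:
  "enc (x, u) \<in> lift U \<longleftrightarrow>
    x \<in> A \<and> (\<exists>p b. u = Label p \<and> p \<in> A \<and> b \<in> A \<and> enc (b, 1) \<in> U \<and> le x (imp p b))"
  unfolding lift_def by auto

lemma emb_subset_pts: "emb a \<subseteq> pts"
  unfolding emb_def by auto

lemma lift_subset_pts: "lift U \<subseteq> pts"
  unfolding lift_def by auto

lemma emb_mem_down_pts:
  assumes "a \<in> A"
  shows "emb a \<in> down_pts"
  unfolding down_sets_def
proof (intro CollectI conjI ballI impI emb_subset_pts)
  fix z w assume "z \<in> emb a" "w \<in> pts" "pt_le w z"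
  then obtain x y where "z = enc (x, 1)" "x \<in> A" "le x a" "w = enc (y, 1)" "y \<in> A" "le y x"
    unfolding emb_def by auto
  with assms show "w \<in> emb a"
    using ord_trans[of y x a] by simp
qed

lemma lift_mem_down_pts: "lift U \<in> down_pts"
  unfolding down_sets_def
proof (intro CollectI conjI ballI impI lift_subset_pts)
  fix z w assume "z \<in> lift U" "w \<in> pts" "pt_le w z"
  then obtain x y p b where "z = enc (x, Label p)" "w = enc (y, Label p)" "x \<in> A" "y \<in> A" "le y x"
    and "p \<in> A" "b \<in> A" "enc (b, 1) \<in> U" "le x (imp p b)"
    unfolding lift_def by auto
  then show "w \<in> lift U"
    using ord_trans[of y x "imp p b"] imp_closed[of p b] by auto
qed

lemma lift_mono: "U \<subseteq> V \<Longrightarrow> lift U \<subseteq> lift V"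
  unfolding lift_def by blast

lemma emb_one: "emb e = down_pts_one"
proof (intro set_eqI)
  fix z show "z \<in> emb e \<longleftrightarrow> z \<in> down_pts_one"
  proof (cases "z \<in> pts")
    case True
    then obtain x u where "z = enc (x, u)" by blast
    then show ?thesis
      by (auto simp: down_one_def one_closed)
  next
    case False
    then show ?thesis
      using emb_subset_pts by (auto simp: down_one_def)
  qed
qed

lemma emb_mult:
  assumes "a \<in> A" "b \<in> A"
  shows "emb (m a b) = down_pts_mult (emb a) (emb b)"
proof (intro set_eqI iffI)
  fix z assume "z \<in> emb (m a b)"
  then obtain x where "z = enc (x, 1)" "x \<in> A" "le x (m a b)"
    unfolding emb_def by blast
  moreover have "enc (a, 1) \<in> emb a" "enc (b, 1) \<in> emb b"
    using assms ord_refl by simp_all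
  ultimately show "z \<in> down_pts_mult (emb a) (emb b)"
    by (intro down_multI[where x = "enc (a, 1)" and y = "enc (b, 1)" and mult = pt_mult]) simp_all
next
  fix z assume "z \<in> down_pts_mult (emb a) (emb b)"
  then obtain s t where "z \<in> pts" "s \<in> emb a" "t \<in> emb b" "pt_le z (pt_mult s t)"
    by (rule down_multE)
  then obtain x y w where "z = enc (w, 1)" "w \<in> A" "le w (m x y)"
    and "x \<in> A" "le x a" "y \<in> A" "le y b"
    unfolding emb_def by auto
  with assms show "z \<in> emb (m a b)"
    using mult_mono[of x a y b] ord_trans[of w "m x y" "m a b"] mult_closed by simp
qed

lemma le_iff_emb_subset:
  assumes "a \<in> A" "b \<in> A"
  shows "le a b \<longleftrightarrow> emb a \<subseteq> emb b"
proof
  assume "le a b"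
  with assms show "emb a \<subseteq> emb b"
    unfolding emb_def using ord_trans by blast
next
  assume "emb a \<subseteq> emb b"
  moreover have "enc (a, 1) \<in> emb a"
    using assms ord_refl by simp
  ultimately have "enc (a, 1) \<in> emb b"
    by blast
  then show "le a b"
    by simp
qed

lemma strict_monoidal_order_embedding_emb:
  "strict_monoidal_order_embedding A le m e down_pts (\<subseteq>) down_pts_mult down_pts_one emb"
  unfolding strict_monoidal_order_embedding_def
  by (simp add: emb_mem_down_pts emb_one emb_mult le_iff_emb_subset)

lemma down_pts_mult_lift_emb_imp_subset:
  assumes "a \<in> A" "b \<in> A"
  shows "down_pts_mult (lift (emb a)) (emb (imp a b)) \<subseteq> lift (emb b)"
proof
  fix z assume "z \<in> down_pts_mult (lift (emb a)) (emb (imp a b))"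
  then obtain s t where "z \<in> pts" "s \<in> lift (emb a)" "t \<in> emb (imp a b)" "pt_le z (pt_mult s t)"
    by (rule down_multE)
  then obtain w x y p b' where z: "z = enc (w, Label p)" "w \<in> A" "le w (m x y)"
    and x: "x \<in> A" "p \<in> A" "b' \<in> A" "le b' a" "le x (imp p b')"
    and y: "y \<in> A" "le y (imp a b)"
    unfolding lift_def emb_def by (auto simp: one_tag_def)
  have "le x (imp p a)"
    using x assms imp_mono[of p b' a] ord_trans[of x "imp p b'" "imp p a"] imp_closed by simp
  with x y assms have "le (m x y) (m (imp p a) (imp a b))"
    using mult_mono imp_closed by simp
  moreover have "le (m (imp p a) (imp a b)) (imp p b)"
    using imp_comp x(2) assms by simp
  ultimately have "le (m x y) (imp p b)"
    using ord_trans[of "m x y" "m (imp p a) (imp a b)" "imp p b"] x y assms mult_closed imp_closed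
    by simp
  then have "le w (imp p b)"
    using ord_trans[of w "m x y" "imp p b"] z x y assms mult_closed imp_closed by simp
  moreover have "enc (b, 1) \<in> emb b"
    using assms ord_refl by simp
  ultimately show "z \<in> lift (emb b)"
    unfolding z(1) using z(2) x(2) assms(2) by auto
qed

lemma subset_emb_imp_if_down_pts_mult_subset:
  assumes "a \<in> A" "b \<in> A" "Z \<in> down_pts" "down_pts_mult (lift (emb a)) Z \<subseteq> lift (emb b)"
  shows "Z \<subseteq> emb (imp a b)"
proof
  fix t assume "t \<in> Z"
  moreover from this assms(3) have "t \<in> pts"
    by (blast dest: down_sets_subset)
  then obtain y u where t: "t = enc (y, u)" "y \<in> A"
    by auto
  moreover have "enc (e, Label a) \<in> lift (emb a)"
    using assms(1) one_closed one_le_imp_self ord_refl by auto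
  moreover have "pt_le (enc (y, Label a * u)) (pt_mult (enc (e, Label a)) t)"
    using t ord_refl by (simp add: mult_one_left)
  ultimately have "enc (y, Label a * u) \<in> down_pts_mult (lift (emb a)) Z"
    by (intro down_multI[where x = "enc (e, Label a)" and y = t and mult = pt_mult]) simp_all
  with assms(4) have "enc (y, Label a * u) \<in> lift (emb b)"
    by blast
  then obtain b' where "u = 1" "b' \<in> A" "le b' b" "le y (imp a b')"
    by (auto simp: Label_times_eq_Label_iff)
  with t assms(1,2) show "t \<in> emb (imp a b)"
    using imp_mono[of a b' b] ord_trans[of y "imp a b'" "imp a b"] imp_closed by simp
qed

lemma st_imp_lift_emb:
  assumes "a \<in> A" "b \<in> A"
  shows "st_imp down_pts (\<subseteq>) down_pts_mult (\<lambda>U. U) (lift (emb a)) (lift (emb b)) = emb (imp a b)"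
proof -
  have "st_res down_pts (\<subseteq>) down_pts_mult (lift (emb a)) (lift (emb b)) = emb (imp a b)"
    using assms imp_closed
    by (intro st_res_eqI partial_order_on'_down_sets emb_mem_down_pts
        down_pts_mult_lift_emb_imp_subset subset_emb_imp_if_down_pts_mult_subset) simp_all
  then show ?thesis
    unfolding st_imp_def
    using st_box_id[OF partial_order_on'_down_sets emb_mem_down_pts] assms imp_closed by simp
qed

lemma spacetime_representation:
  "\<exists>(X :: 'b set set) leX mX eX nabla F i.
     nc_spacetime X leX mX eX nabla \<and>
     (\<forall>x\<in>X. F x \<in> X) \<and> (\<forall>x\<in>X. \<forall>y\<in>X. leX x y \<longrightarrow> leX (F x) (F y)) \<and>
     strict_monoidal_order_embedding A le m e X leX mX eX i \<and>
     (\<forall>a\<in>A. \<forall>b\<in>A. i (imp a b) = st_imp X leX mX nabla (F (i a)) (F (i b)))"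
proof (intro exI conjI)
  show "nc_spacetime down_pts (\<subseteq>) down_pts_mult down_pts_one (\<lambda>U. U)"
    by (rule nc_spacetime_id[OF ordered_monoid_on.quantale_down_sets[OF ordered_monoid_on_pts]])
  show "\<forall>U\<in>down_pts. lift U \<in> down_pts"
    using lift_mem_down_pts by blast
  show "\<forall>U\<in>down_pts. \<forall>V\<in>down_pts. U \<subseteq> V \<longrightarrow> lift U \<subseteq> lift V"
    using lift_mono by blast
  show "strict_monoidal_order_embedding A le m e down_pts (\<subseteq>) down_pts_mult down_pts_one emb"
    by (rule strict_monoidal_order_embedding_emb)
  show "\<forall>a\<in>A. \<forall>b\<in>A. emb (imp a b) = st_imp down_pts (\<subseteq>) down_pts_mult (\<lambda>U. U) (lift (emb a)) (lift (emb b))"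
    using st_imp_lift_emb by simp
qed

end

(* The carrier type ('a + nat) list set is imposed by the theorem; any injective encoding of
   points would do. *)

fun list_code :: "'a \<times> 'a tag \<Rightarrow> ('a + nat) list set" where
  "list_code (x, Unit) = {[Inl x]}"
| "list_code (x, Label p) = {[Inl x, Inl p]}"
| "list_code (x, Zero) = {[Inl x, Inr 0]}"

lemma inj_list_code: "inj list_code"
proof (rule injI)
  fix p q :: "'a \<times> 'a tag"
  assume "list_code p = list_code q"
  then show "p = q"
    by (cases p rule: list_code.cases; cases q rule: list_code.cases) auto
qed

theorem theorem6p1:
  fixes A :: "'a set" and le :: "'a \<Rightarrow> 'a \<Rightarrow> bool" and m :: "'a \<Rightarrow> 'a \<Rightarrow> 'a"
    and e :: 'a and imp :: "'a \<Rightarrow> 'a \<Rightarrow> 'a"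
  assumes "strong_algebra A le m e imp"
  shows "\<exists>(X :: ('a + nat) list set set set) leX mX eX nabla F i.
           nc_spacetime X leX mX eX nabla \<and>
           (\<forall>x\<in>X. F x \<in> X) \<and> (\<forall>x\<in>X. \<forall>y\<in>X. leX x y \<longrightarrow> leX (F x) (F y)) \<and>
           strict_monoidal_order_embedding A le m e X leX mX eX i \<and>
           (\<forall>a\<in>A. \<forall>b\<in>A. i (imp a b) = st_imp X leX mX nabla (F (i a)) (F (i b)))"
proof -
  interpret tagged_points A le m e imp list_code
    using assms inj_list_code
    by (intro tagged_points.intro strong_algebra_on_if_strong_algebra tagged_points_axioms.intro)
  show ?thesis
    by (rule spacetime_representation)
qed

end
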